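(* Let $(u_n)_{n\in\mathbb Z}$ be a 4-chain. Then infinitely many terms $u_n$ are divisible by $3$, and no term $u_n$ is divisible by $2$, by $5$, or by $7$.
   Context: A 4-chain is a bi-infinite sequence of integers $(u_n)_{n\in\mathbb Z}$ satisfying $u_{n-1}u_{n+1}=u_n^3+u_n^{f(n)}+1$ for all $n\in\mathbb Z$, where $f(n)=1$ if $n\equiv 0,3\pmod 4$ and $f(n)=2$ if $n\equiv 1,2\pmod 4$. *)

theory Defs
  imports Main
begin

definition chain_exp :: "int \<Rightarrow> nat" where
  "chain_exp n = (if n mod 4 = 0 \<or> n mod 4 = 3 then 1 else 2)"

definition four_chain :: "(int \<Rightarrow> int) \<Rightarrow> bool" where
  "four_chain u \<longleftrightarrow>
     (\<forall>n::int. u (n - 1) * u (n + 1) = u n ^ 3 + u n ^ chain_exp n + 1)"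

end

theory Submission
  imports Defs "HOL-Library.Infinite_Set" "HOL-Computational_Algebra.Primes"
begin

text \<open>
  Reduce the recurrence u(n-1) u(n+1) = F(u n) modulo a prime p, where F(b) = b^3 + b^e + 1 with
  e \<in> {1,2}. For p = 2, 5, 7 the polynomial F has no root modulo p, so p cannot divide any u n:
  it would divide the product u(n-1) u(n+1) on the left of the recurrence at n+1.
  Modulo 3 we have F(1) \<equiv> 0, so a term prime to 3 whose neighbours are prime to 3 is \<equiv> 2.
  A run of three consecutive terms \<equiv> 2 around an index with e = 1 is impossible, since there
  the left side is \<equiv> 4 \<equiv> 1 and the right side is \<equiv> 11 \<equiv> 2; every window of three
  consecutive indices contains such an index, so multiples of 3 occur arbitrarily far out.
\<close>

lemma cubic_mod:
  fixes b p :: int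
  shows "(b ^ 3 + b ^ e + 1) mod p = ((b mod p) ^ 3 + (b mod p) ^ e + 1) mod p"
  by (metis mod_add_cong mod_mod_trivial power_mod)

lemma chain_exp_cases: "chain_exp n = 1 \<or> chain_exp n = 2"
  by (simp add: chain_exp_def)

lemma four_chainD:
  "four_chain u \<Longrightarrow> u (n - 1) * u (n + 1) = u n ^ 3 + u n ^ chain_exp n + 1"
  by (simp add: four_chain_def)

lemma cubic_no_root_mod_2_5_7:
  fixes b p :: int
  assumes "p \<in> {2, 5, 7}" and "e = 1 \<or> e = 2"
  shows "\<not> p dvd b ^ 3 + b ^ e + 1"
proof -
  define r where "r = b mod p"
  have "0 \<le> r" "r < p"
    using assms(1) by (auto simp: r_def)
  then have "r \<in> {0, 1, 2, 3, 4, 5, 6}" "r < p"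
    using assms(1) by auto
  then have "(r ^ 3 + r ^ e + 1) mod p \<noteq> 0"
    using assms by auto
  then show ?thesis
    by (simp add: dvd_eq_mod_eq_0 cubic_mod[of b e p] r_def)
qed

lemma four_chain_not_dvd_2_5_7:
  assumes "four_chain u" and "p \<in> {2, 5, 7}"
  shows "\<not> p dvd u n"
proof
  assume "p dvd u n"
  then have "p dvd u n * u (n + 2)"
    by simp
  also have "u n * u (n + 2) = u (n + 1) ^ 3 + u (n + 1) ^ chain_exp (n + 1) + 1"
    using four_chainD[OF assms(1), of "n + 1"] by (simp add: add.assoc)
  finally show False
    using cubic_no_root_mod_2_5_7[OF assms(2) chain_exp_cases] by blast
qed

lemma four_chain_mod_3_eq_2:
  assumes "four_chain u"
    and "\<not> 3 dvd u (n - 1)" "\<not> 3 dvd u n" "\<not> 3 dvd u (n + 1)"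
  shows "u n mod 3 = 2"
proof -
  have "\<not> 3 dvd u (n - 1) * u (n + 1)"
    using assms(2,4) by (simp add: prime_dvd_mult_iff)
  then have "(u n ^ 3 + u n ^ chain_exp n + 1) mod 3 \<noteq> 0"
    using four_chainD[OF assms(1)] by (simp add: dvd_eq_mod_eq_0)
  then have "u n mod 3 \<noteq> 1"
    using cubic_mod[of "u n" "chain_exp n" 3] by auto
  moreover have "u n mod 3 \<noteq> 0"
    using assms(3) by (simp add: dvd_eq_mod_eq_0)
  ultimately show ?thesis
    by linarith
qed

lemma four_chain_not_all_mod_3_eq_2:
  assumes "four_chain u" and "chain_exp n = 1"
    and "u (n - 1) mod 3 = 2" "u n mod 3 = 2" "u (n + 1) mod 3 = 2"
  shows False
proof -
  have "(u (n - 1) * u (n + 1)) mod 3 = 1"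
    using assms(3,5) by (simp add: mod_mult_eq[symmetric])
  moreover have "(u n ^ 3 + u n ^ 1 + 1) mod 3 = 2"
    using assms(4) cubic_mod[of "u n" 1 3] by simp
  ultimately show False
    using four_chainD[OF assms(1), of n] assms(2) by simp
qed

lemma chain_exp_eq_1_among_three: "\<exists>k \<in> {n, n + 1, n + 2}. chain_exp k = 1"
proof -
  have "n mod 4 = 0 \<or> n mod 4 = 3 \<or> (n + 1) mod 4 = 3 \<or> (n + 2) mod 4 = 3"
    by presburger
  then show ?thesis
    by (auto simp: chain_exp_def)
qed

lemma four_chain_3_dvd_beyond:
  assumes "four_chain u"
  shows "\<exists>m \<ge> n. 3 dvd u m"
proof (rule ccontr)
  assume "\<not> ?thesis"
  then have not_dvd: "\<not> 3 dvd u m" if "m \<ge> n" for m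
    using that by auto
  have mod_2: "u m mod 3 = 2" if "m \<ge> n + 1" for m
    using four_chain_mod_3_eq_2[OF assms] not_dvd that by simp
  obtain k where k: "k \<in> {n + 2, n + 3, n + 4}" and "chain_exp k = 1"
    using chain_exp_eq_1_among_three[of "n + 2"] by (auto simp: add.assoc)
  then show False
    using four_chain_not_all_mod_3_eq_2[OF assms, of k] mod_2[of "k - 1"] mod_2[of k] mod_2[of "k + 1"] k
    by auto
qed

theorem theorem7:
  fixes u :: "int \<Rightarrow> int"
  assumes "four_chain u"
  shows "infinite {n::int. (3::int) dvd u n}
         \<and> (\<forall>n. \<not> (2::int) dvd u n \<and> \<not> (5::int) dvd u n \<and> \<not> (7::int) dvd u n)"
proof
  show "infinite {n. 3 dvd u n}"
    unfolding infinite_int_iff_unbounded_le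
    using four_chain_3_dvd_beyond[OF assms] by (metis abs_ge_self mem_Collect_eq order_trans)
  show "\<forall>n. \<not> 2 dvd u n \<and> \<not> 5 dvd u n \<and> \<not> 7 dvd u n"
    using four_chain_not_dvd_2_5_7[OF assms] by simp
qed

end
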